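(* Let $\Gamma_M$ ($M>0$) be a family of nonatomic routing games with a single OD pair with demand $M$, sharing the same graph, path set and edge costs $(c_e)_{e\in\mathcal E}$, where each $c_e$ is analytic at $0$, i.e. coincides with a convergent power series $\sum_{k\ge 0}c_{k,e}x^k$ on some interval $[0,\delta_e)$, $\delta_e>0$. Then $\mathrm{PoA}(\Gamma_M)\to 1$ as $M\to 0$.
   Context: A nonatomic routing game with a single OD pair consists of a finite directed multigraph with edge set $\mathcal E$, a nonempty finite set $\mathcal P$ of paths from an origin to a destination, a demand $M>0$, and continuous nondecreasing edge costs $c_e:[0,\infty)\to[0,\infty)$. Feasible flows: $f\in\mathbb R_+^{\mathcal P}$ with $\sum_p f_p=M$; loads $x_e=\sum_{p\ni e}f_p$; path costs $c_p(f)=\sum_{e\in p}c_e(x_e)$. A Wardrop equilibrium is a feasible $f^*$ with $c_p(f^* )\le c_{p'}(f^* )$ whenever $f^*_p>0$. Social cost $L(x)=\sum_e x_ec_e(x_e)$; $\mathrm{Opt}$ is its minimum over feasible loads, $\mathrm{Eq}=L(x^* )$ at an equilibrium load, and $\mathrm{PoA}=\mathrm{Eq}/\mathrm{Opt}$; it is assumed that $\mathrm{Opt}>0$ (otherwise $\mathrm{PoA}:=1$). *)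

theory Defs
  imports "HOL-Analysis.Analysis"
begin

text \<open>Edges of the multigraph are elements
  of a finite set E (of an arbitrary edge type); paths are indices in a finite
  set P, and pe p is the set of edges of path p. Flows are functions on paths.\<close>

definition feasible :: "'p set \<Rightarrow> real \<Rightarrow> ('p \<Rightarrow> real) \<Rightarrow> bool" where
  "feasible P M f \<longleftrightarrow> (\<forall>p\<in>P. 0 \<le> f p) \<and> (\<Sum>p\<in>P. f p) = M"

definition load :: "'p set \<Rightarrow> ('p \<Rightarrow> 'e set) \<Rightarrow> ('p \<Rightarrow> real) \<Rightarrow> 'e \<Rightarrow> real" where
  "load P pe f e = (\<Sum>p\<in>{p\<in>P. e \<in> pe p}. f p)"

definition path_cost :: "'p set \<Rightarrow> ('p \<Rightarrow> 'e set) \<Rightarrow> ('e \<Rightarrow> real \<Rightarrow> real)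
    \<Rightarrow> ('p \<Rightarrow> real) \<Rightarrow> 'p \<Rightarrow> real" where
  "path_cost P pe c f p = (\<Sum>e\<in>pe p. c e (load P pe f e))"

definition wardrop_eq :: "'p set \<Rightarrow> ('p \<Rightarrow> 'e set) \<Rightarrow> ('e \<Rightarrow> real \<Rightarrow> real)
    \<Rightarrow> real \<Rightarrow> ('p \<Rightarrow> real) \<Rightarrow> bool" where
  "wardrop_eq P pe c M f \<longleftrightarrow> feasible P M f \<and>
     (\<forall>p\<in>P. \<forall>p'\<in>P. 0 < f p \<longrightarrow> path_cost P pe c f p \<le> path_cost P pe c f p')"

definition social_cost :: "'e set \<Rightarrow> 'p set \<Rightarrow> ('p \<Rightarrow> 'e set) \<Rightarrow> ('e \<Rightarrow> real \<Rightarrow> real)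
    \<Rightarrow> ('p \<Rightarrow> real) \<Rightarrow> real" where
  "social_cost E P pe c f = (\<Sum>e\<in>E. load P pe f e * c e (load P pe f e))"

definition opt_cost :: "'e set \<Rightarrow> 'p set \<Rightarrow> ('p \<Rightarrow> 'e set) \<Rightarrow> ('e \<Rightarrow> real \<Rightarrow> real)
    \<Rightarrow> real \<Rightarrow> real" where
  "opt_cost E P pe c M = Inf (social_cost E P pe c ` {f. feasible P M f})"

definition poa :: "'e set \<Rightarrow> 'p set \<Rightarrow> ('p \<Rightarrow> 'e set) \<Rightarrow> ('e \<Rightarrow> real \<Rightarrow> real)
    \<Rightarrow> real \<Rightarrow> ('p \<Rightarrow> real) \<Rightarrow> real" where
  "poa E P pe c M f = (if 0 < opt_cost E P pe c M
      then social_cost E P pe c f / opt_cost E P pe c M else 1)"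

definition analytic_at_zero :: "(real \<Rightarrow> real) \<Rightarrow> bool" where
  "analytic_at_zero g \<longleftrightarrow> (\<exists>\<delta>>0. \<exists>a::nat \<Rightarrow> real.
      \<forall>x. 0 \<le> x \<and> x < \<delta> \<longrightarrow> (\<lambda>k. a k * x ^ k) sums g x)"

end

theory Submission
  imports Defs
begin

text \<open>Near 0 every edge cost either vanishes or behaves like \<alpha>_e x ^ d_e with \<alpha>_e > 0.
  If some path consists of vanishing edges, Opt = 0 for small demand and PoA = 1 by convention.
  Otherwise let s be the largest degree such that some path has all its non-vanishing edges of
  degree at least s; every path then has a non-vanishing edge of degree at most s, so the
  equilibrium cost \<Lambda> of demand M is of exact order M ^ s.  Against any feasible flow g with
  loads y (the equilibrium f having loads x), weigh the edges by the truncated costs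
  w_e = (s+1) min (c_e(x_e)) \<Lambda>: the equilibrium property gives \<Sum> y_e w_e \<ge> (s+1) \<Lambda> M, and edgewise y (w - c(y)) \<le> s x c(x) + o(M ^ (s+1))
  (by Young's inequality on edges of degree s; edges of higher degree are negligible; edges of
  lower degree carry o(M) flow unless their cost already exceeds w).  Summing,
  L(g) \<ge> \<Lambda> M - o(M ^ (s+1)) = (1 - o(1)) L(f).\<close>

section \<open>Nonnegative costs analytic at zero\<close>

definition vanishes_near_zero :: "(real \<Rightarrow> real) \<Rightarrow> bool" where
  "vanishes_near_zero g \<longleftrightarrow> (\<exists>\<rho>>0. \<forall>y. 0 \<le> y \<and> y \<le> \<rho> \<longrightarrow> g y = 0)"

definition leading_term :: "(real \<Rightarrow> real) \<Rightarrow> real \<Rightarrow> nat \<Rightarrow> bool" where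
  "leading_term g \<alpha> d \<longleftrightarrow>
     (\<exists>B \<rho>. 0 \<le> B \<and> 0 < \<rho> \<and> (\<forall>y. 0 \<le> y \<and> y \<le> \<rho> \<longrightarrow> \<bar>g y - \<alpha> * y ^ d\<bar> \<le> B * y ^ Suc d))"

lemma sums_abs_le:
  fixes u v :: "nat \<Rightarrow> real"
  assumes "u sums s" "v sums t" "\<And>k. \<bar>u k\<bar> \<le> v k"
  shows "\<bar>s\<bar> \<le> t"
proof -
  have "s \<le> t" by (rule sums_le[OF _ assms(1,2)]) (use assms(3) abs_le_D1 in blast)
  moreover have "-s \<le> t"
    by (rule sums_le[OF _ sums_minus[OF assms(1)] assms(2)]) (use assms(3) abs_le_D2 in blast)
  ultimately show ?thesis by linarith
qed

text \<open>On [0, r/2] the tail of the series is dominated by a geometric series of ratio 1/2,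
  because the terms a k * r ^ k are bounded.\<close>
lemma leading_term_powser:
  fixes a :: "nat \<Rightarrow> real" and g :: "real \<Rightarrow> real"
  assumes "0 < \<delta>"
    and sums: "\<forall>x. 0 \<le> x \<and> x < \<delta> \<longrightarrow> (\<lambda>k. a k * x ^ k) sums g x"
    and below: "\<forall>k<d. a k = 0"
  shows "leading_term g (a d) d"
proof -
  define r where "r = \<delta> / 2"
  have r: "0 < r" "r < \<delta>" using \<open>0 < \<delta>\<close> by (auto simp: r_def)
  have "(\<lambda>k. a k * r ^ k) \<longlonglongrightarrow> 0"
    using sums r by (intro summable_LIMSEQ_zero) (auto simp: sums_iff)
  then obtain T where T: "T > 0" "\<And>k. \<bar>a k * r ^ k\<bar> \<le> T"
  proof -
    have "Bseq (\<lambda>k. a k * r ^ k)" using \<open>_ \<longlonglongrightarrow> 0\<close> by (rule convergent_imp_Bseq[OF convergentI])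
    then show ?thesis using that by (auto elim: BseqE)
  qed
  have "\<bar>g y - a d * y ^ d\<bar> \<le> (2 * T / r ^ Suc d) * y ^ Suc d" if y: "0 \<le> y" "y \<le> r / 2" for y
  proof -
    define q where "q = y / r"
    have q: "0 \<le> q" "q \<le> 1/2" and yq: "y = r * q" using y r by (auto simp: q_def field_simps)
    have "(\<lambda>k. a k * y ^ k) sums g y" using sums y r by auto
    then have "(\<lambda>k. a (k + Suc d) * y ^ (k + Suc d)) sums (g y - (\<Sum>k<Suc d. a k * y ^ k))"
      by (rule sums_split_initial_segment)
    then have tail: "(\<lambda>k. a (k + Suc d) * y ^ (k + Suc d)) sums (g y - a d * y ^ d)"
      using below by simp
    have geom: "(\<lambda>k. T * q ^ Suc d * (1/2) ^ k) sums (T * q ^ Suc d * (1 / (1 - 1/2)))"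
      by (intro sums_mult geometric_sums) simp
    have "\<bar>a (k + Suc d) * y ^ (k + Suc d)\<bar> \<le> T * q ^ Suc d * (1/2) ^ k" for k
    proof -
      have "\<bar>a (k + Suc d) * y ^ (k + Suc d)\<bar> = \<bar>a (k + Suc d) * r ^ (k + Suc d)\<bar> * q ^ (k + Suc d)"
        using q by (simp add: yq power_mult_distrib abs_mult)
      also have "\<dots> \<le> T * q ^ (k + Suc d)"
        using T(2)[of "k + Suc d"] q by (intro mult_right_mono) auto
      also have "\<dots> = T * (q ^ Suc d * q ^ k)" by (simp add: power_add mult.commute)
      also have "\<dots> \<le> T * (q ^ Suc d * (1/2) ^ k)"
        using T q by (intro mult_left_mono power_mono) auto
      finally show ?thesis by simp
    qed
    then have "\<bar>g y - a d * y ^ d\<bar> \<le> T * q ^ Suc d * (1 / (1 - 1/2))"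
      by (rule sums_abs_le[OF tail geom])
    also have "\<dots> = (2 * T / r ^ Suc d) * y ^ Suc d"
      using r by (simp add: q_def power_divide)
    finally show ?thesis .
  qed
  then show ?thesis unfolding leading_term_def using r T by (intro exI[of _ "2 * T / r ^ Suc d"] exI[of _ "r/2"]) auto
qed

lemma leading_term_eventually:
  assumes "leading_term g \<alpha> d"
  obtains B where "\<forall>\<^sub>F y in at_right 0. \<bar>g y - \<alpha> * y ^ d\<bar> \<le> B * y ^ Suc d"
proof -
  obtain B \<rho> where "0 < \<rho>" and B: "\<forall>y. 0 \<le> y \<and> y \<le> \<rho> \<longrightarrow> \<bar>g y - \<alpha> * y ^ d\<bar> \<le> B * y ^ Suc d"
    using assms unfolding leading_term_def by blast
  have "\<forall>\<^sub>F y in at_right 0. 0 < y \<and> y \<le> \<rho>"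
    using \<open>0 < \<rho>\<close> by (auto simp: eventually_at_right_field intro: exI[of _ \<rho>])
  then show ?thesis using B by (intro that[of B]) (auto elim!: eventually_mono)
qed

lemma leading_term_nonneg_imp_pos:
  assumes "leading_term g \<alpha> d" "\<alpha> \<noteq> 0" "\<forall>y\<ge>0. 0 \<le> g y"
  shows "0 < \<alpha>"
proof (rule ccontr)
  assume "\<not> 0 < \<alpha>"
  with assms(2) have "\<alpha> < 0" by simp
  obtain B where B: "\<forall>\<^sub>F y in at_right 0. \<bar>g y - \<alpha> * y ^ d\<bar> \<le> B * y ^ Suc d"
    using leading_term_eventually[OF assms(1)] by blast
  have "((\<lambda>y. \<alpha> + B * y) \<longlongrightarrow> \<alpha> + B * 0) (at_right 0)"
    by (intro tendsto_intros)
  then have "\<forall>\<^sub>F y in at_right 0. \<alpha> + B * y < 0"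
    using \<open>\<alpha> < 0\<close> by (intro order_tendstoD(2)) auto
  with B eventually_at_right_less
  have "\<forall>\<^sub>F y in at_right (0::real). False"
  proof eventually_elim
    case (elim y)
    then have "g y \<le> y ^ d * (\<alpha> + B * y)" by (simp add: abs_le_iff algebra_simps)
    also have "\<dots> < 0" using elim by (intro mult_pos_neg) auto
    moreover have "0 \<le> g y" using assms(3) elim by simp
    ultimately show False by simp
  qed
  then show False by simp
qed

lemma analytic_at_zero_nonneg_cases:
  assumes "analytic_at_zero g" "\<forall>y\<ge>0. 0 \<le> g y"
  shows "vanishes_near_zero g \<or> (\<exists>\<alpha> d. 0 < \<alpha> \<and> leading_term g \<alpha> d)"
proof -
  obtain \<delta> a where "0 < \<delta>" and sums: "\<forall>x. 0 \<le> x \<and> x < \<delta> \<longrightarrow> (\<lambda>k. a k * x ^ k) sums g x"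
    using assms(1) unfolding analytic_at_zero_def by blast
  show ?thesis
  proof (cases "\<forall>k. a k = 0")
    case True
    have "g y = 0" if "0 \<le> y" "y \<le> \<delta>/2" for y
    proof -
      have "(\<lambda>k. a k * y ^ k) sums g y" using sums that \<open>0 < \<delta>\<close> by simp
      moreover have "(\<lambda>k. a k * y ^ k) sums 0" using True by simp
      ultimately show ?thesis by (rule sums_unique2)
    qed
    then show ?thesis using \<open>0 < \<delta>\<close> unfolding vanishes_near_zero_def
      by (intro disjI1 exI[of _ "\<delta>/2"]) auto
  next
    case False
    define d where "d = (LEAST k. a k \<noteq> 0)"
    have "a d \<noteq> 0" using False LeastI_ex[of "\<lambda>k. a k \<noteq> 0"] by (auto simp: d_def)
    moreover have "\<forall>k<d. a k = 0" using not_less_Least by (auto simp: d_def)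
    then have "leading_term g (a d) d" by (rule leading_term_powser[OF \<open>0 < \<delta>\<close> sums])
    ultimately have "0 < a d" using leading_term_nonneg_imp_pos assms(2) by blast
    with \<open>leading_term g (a d) d\<close> show ?thesis by blast
  qed
qed

section \<open>Edgewise estimates for small loads\<close>

lemma eventually_mult_less_at_right_0:
  fixes c \<epsilon> :: real
  assumes "0 < \<epsilon>"
  shows "\<forall>\<^sub>F M in at_right 0. c * M < \<epsilon>"
proof (rule order_tendstoD(2))
  show "((\<lambda>M. c * M) \<longlongrightarrow> 0) (at_right 0)"
    by (auto intro!: tendsto_eq_intros)
qed (rule assms)

lemma leading_term_bounds:
  assumes "leading_term g \<alpha> d" "0 < \<alpha>"
  shows "\<forall>\<^sub>F M in at_right 0. \<forall>y. 0 \<le> y \<and> y \<le> M \<longrightarrow> \<alpha>/2 * y ^ d \<le> g y \<and> g y \<le> 2 * \<alpha> * y ^ d"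
proof -
  obtain B \<rho> where "0 \<le> B" "0 < \<rho>"
    and B: "\<forall>y. 0 \<le> y \<and> y \<le> \<rho> \<longrightarrow> \<bar>g y - \<alpha> * y ^ d\<bar> \<le> B * y ^ Suc d"
    using assms(1) unfolding leading_term_def by blast
  have "\<forall>\<^sub>F M in at_right 0. 1 * M < \<rho> \<and> B * M < \<alpha>/2"
    using \<open>0 < \<rho>\<close> assms(2) by (intro eventually_conj eventually_mult_less_at_right_0) auto
  then show ?thesis
  proof eventually_elim
    case (elim M)
    show ?case
    proof (intro allI impI)
      fix y assume y: "0 \<le> y \<and> y \<le> M"
      have "\<bar>g y - \<alpha> * y ^ d\<bar> \<le> (B * y) * y ^ d" using B y elim by auto
      also have "\<dots> \<le> \<alpha>/2 * y ^ d"
      proof (rule mult_right_mono)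
        show "B * y \<le> \<alpha>/2" using mult_left_mono[of y M B] y elim \<open>0 \<le> B\<close> by linarith
      qed (use y in simp)
      finally have "\<bar>g y - \<alpha> * y ^ d\<bar> \<le> \<alpha>/2 * y ^ d" .
      moreover have "0 \<le> \<alpha> * y ^ d" using y assms(2) by simp
      ultimately show "\<alpha>/2 * y ^ d \<le> g y \<and> g y \<le> 2 * \<alpha> * y ^ d"
        unfolding abs_le_iff by linarith
    qed
  qed
qed

lemma young_power:
  fixes y v :: real
  assumes "0 \<le> y" "0 \<le> v"
  shows "real (Suc d) * y * v ^ d \<le> y ^ Suc d + real d * v ^ Suc d"
proof (cases "v = 0")
  case True
  then show ?thesis using assms by (cases d) auto
next
  case False
  with assms have "0 < v" by simp
  have "1 + real (Suc d) * (y / v - 1) \<le> (1 + (y / v - 1)) ^ Suc d"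
    by (rule Bernoulli_inequality) (use assms \<open>0 < v\<close> in simp)
  then have "v ^ Suc d * (1 + real (Suc d) * (y / v - 1)) \<le> v ^ Suc d * (y / v) ^ Suc d"
    using \<open>0 < v\<close> by (intro mult_left_mono) auto
  also have "v ^ Suc d * (y / v) ^ Suc d = y ^ Suc d"
    using \<open>0 < v\<close> by (simp add: power_divide)
  also have "v ^ Suc d * (1 + real (Suc d) * (y / v - 1)) =
      v ^ Suc d + real (Suc d) * (y * v ^ d - v ^ Suc d)"
    using \<open>0 < v\<close> by (simp add: field_simps)
  finally show ?thesis by (simp add: algebra_simps)
qed

lemma gap_leading_degree:
  fixes g :: "real \<Rightarrow> real"
  assumes x: "0 \<le> x" "x \<le> M" and y: "0 \<le> y" "y \<le> M" and "0 \<le> B" "0 \<le> \<alpha>"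
    and gx: "\<bar>g x - \<alpha> * x ^ d\<bar> \<le> B * x ^ Suc d"
    and gy: "\<bar>g y - \<alpha> * y ^ d\<bar> \<le> B * y ^ Suc d"
    and w: "w \<le> real (Suc d) * g x"
  shows "y * (w - g y) \<le> real d * (x * g x) + 2 * real (Suc d) * B * M * M ^ Suc d"
proof -
  define K where "K = real (Suc d)"
  have xM: "x ^ n \<le> M ^ n" and yM: "y ^ n \<le> M ^ n" for n
    using x y by (auto intro: power_mono)
  have "g x \<le> \<alpha> * x ^ d + B * x ^ Suc d" using gx by (simp add: abs_le_iff)
  then have "K * g x \<le> K * (\<alpha> * x ^ d + B * x ^ Suc d)" by (simp add: K_def)
  moreover have "w \<le> K * g x" unfolding K_def by (rule w)
  ultimately have "w \<le> K * (\<alpha> * x ^ d + B * x ^ Suc d)" by linarith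
  moreover have "\<alpha> * y ^ d - B * y ^ Suc d \<le> g y" using gy by (simp add: abs_le_iff)
  ultimately have "y * (w - g y) \<le> y * (K * (\<alpha> * x ^ d + B * x ^ Suc d) - (\<alpha> * y ^ d - B * y ^ Suc d))"
    using y by (intro mult_left_mono) auto
  also have "\<dots> = \<alpha> * (K * y * x ^ d - y ^ Suc d) + B * (K * (y * x ^ Suc d) + y ^ Suc (Suc d))"
    by (simp add: algebra_simps)
  also have "\<dots> \<le> \<alpha> * (real d * x ^ Suc d) + B * (K * M ^ Suc (Suc d) + M ^ Suc (Suc d))"
  proof -
    have "K * y * x ^ d - y ^ Suc d \<le> real d * x ^ Suc d"
      using young_power[OF y(1) x(1), of d] by (simp add: K_def)
    then have 1: "\<alpha> * (K * y * x ^ d - y ^ Suc d) \<le> \<alpha> * (real d * x ^ Suc d)"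
      using \<open>0 \<le> \<alpha>\<close> by (rule mult_left_mono)
    have "y * x ^ Suc d \<le> M * M ^ Suc d" using x y xM[of "Suc d"] by (intro mult_mono) auto
    then have "K * (y * x ^ Suc d) \<le> K * M ^ Suc (Suc d)"
      unfolding K_def power_Suc[of M "Suc d"] by (rule mult_left_mono) simp
    then have "K * (y * x ^ Suc d) + y ^ Suc (Suc d) \<le> K * M ^ Suc (Suc d) + M ^ Suc (Suc d)"
      using yM[of "Suc (Suc d)"] by linarith
    then have 2: "B * (K * (y * x ^ Suc d) + y ^ Suc (Suc d)) \<le> B * (K * M ^ Suc (Suc d) + M ^ Suc (Suc d))"
      using \<open>0 \<le> B\<close> by (rule mult_left_mono)
    from 1 2 show ?thesis by linarith
  qed
  also have "\<alpha> * (real d * x ^ Suc d) = real d * (x * (\<alpha> * x ^ d))" by (simp add: algebra_simps)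
  also have "\<dots> \<le> real d * (x * (g x + B * x ^ Suc d))"
    using gx x by (intro mult_left_mono) (auto simp: abs_le_iff)
  also have "\<dots> \<le> real d * (x * g x) + real d * B * M ^ Suc (Suc d)"
    using x xM \<open>0 \<le> B\<close> by (simp add: algebra_simps mult_left_mono mult_mono)
  finally show ?thesis by (simp add: K_def algebra_simps)
qed

lemma gap_higher_degree:
  fixes g :: "real \<Rightarrow> real"
  assumes "s < d" "M \<le> 1" and x: "0 \<le> x" "x \<le> M" and y: "0 \<le> y" "y \<le> M" and "0 \<le> \<alpha>"
    and gx: "g x \<le> 2 * \<alpha> * x ^ d" and "0 \<le> g y"
    and w: "w \<le> real (Suc s) * g x"
    and small: "2 * \<alpha> * real (Suc s) * M \<le> \<theta>"
  shows "y * (w - g y) \<le> \<theta> * M ^ Suc s"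
proof -
  define W where "W = real (Suc s) * (2 * \<alpha> * M ^ Suc s)"
  have "x ^ d \<le> M ^ d" using power_mono[OF x(2) x(1)] .
  also have "\<dots> \<le> M ^ Suc s" using assms(1,2) x by (intro power_decreasing) auto
  finally have "2 * \<alpha> * x ^ d \<le> 2 * \<alpha> * M ^ Suc s" using \<open>0 \<le> \<alpha>\<close> by (simp add: mult_left_mono)
  then have "g x \<le> 2 * \<alpha> * M ^ Suc s" using gx by linarith
  then have "real (Suc s) * g x \<le> W" unfolding W_def by (rule mult_left_mono) simp
  with w have "w \<le> W" by linarith
  have "y * (w - g y) \<le> y * w" using y \<open>0 \<le> g y\<close> by (simp add: right_diff_distrib)
  also have "\<dots> \<le> y * W" using \<open>w \<le> W\<close> y by (intro mult_left_mono)
  also have "\<dots> \<le> M * W" using y x \<open>0 \<le> \<alpha>\<close> by (intro mult_right_mono) (auto simp: W_def)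
  also have "\<dots> = (2 * \<alpha> * real (Suc s) * M) * M ^ Suc s" by (simp add: W_def algebra_simps)
  also have "\<dots> \<le> \<theta> * M ^ Suc s" using small y by (intro mult_right_mono) auto
  finally show ?thesis .
qed

text \<open>Either the flow on a low-degree edge is at most t * M, or its cost already exceeds w,
  which is of order M ^ s.\<close>
lemma gap_lower_degree:
  fixes g :: "real \<Rightarrow> real"
  assumes "d < s" "M \<le> 1" and y: "0 \<le> y" "y \<le> M" and "0 < \<alpha>" "0 < t" "0 \<le> C"
    and gy: "\<alpha>/2 * y ^ d \<le> g y"
    and w: "w \<le> real (Suc s) * C * M ^ s"
    and small: "t * real (Suc s) * C \<le> \<theta>" "real (Suc s) * C * M < \<alpha>/2 * t ^ d"
  shows "y * (w - g y) \<le> \<theta> * M ^ Suc s"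
proof (cases "w \<le> g y")
  case True
  then have "y * (w - g y) \<le> 0" using y by (simp add: mult_nonneg_nonpos)
  also have "0 \<le> t * real (Suc s) * C" using \<open>0 < t\<close> \<open>0 \<le> C\<close> by simp
  then have "0 \<le> \<theta>" using small(1) by linarith
  then have "0 \<le> \<theta> * M ^ Suc s" using y by simp
  finally show ?thesis .
next
  case False
  define K where "K = real (Suc s)"
  have "0 \<le> \<alpha>/2 * y ^ d" using y \<open>0 < \<alpha>\<close> by simp
  then have "0 \<le> w" using gy False by linarith
  have "y \<le> t * M"
  proof (rule ccontr)
    assume "\<not> y \<le> t * M"
    then have "\<alpha>/2 * (t * M) ^ d \<le> \<alpha>/2 * y ^ d"
      using \<open>0 < \<alpha>\<close> \<open>0 < t\<close> y by (intro mult_left_mono power_mono) auto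
    also have "\<dots> < K * C * M ^ s" using gy w False by (simp add: K_def)
    also have "\<dots> \<le> K * C * M ^ Suc d"
      using assms(1,2) y \<open>0 \<le> C\<close> by (intro mult_left_mono power_decreasing) (auto simp: K_def)
    finally have "(\<alpha>/2 * t ^ d) * M ^ d < (K * C * M) * M ^ d"
      by (simp add: power_mult_distrib algebra_simps)
    moreover have "(K * C * M) * M ^ d \<le> (\<alpha>/2 * t ^ d) * M ^ d"
      using small(2) y by (intro mult_right_mono) (auto simp: K_def)
    ultimately show False by linarith
  qed
  have "y * (w - g y) \<le> y * w" using y gy \<open>0 \<le> \<alpha>/2 * y ^ d\<close> by (simp add: right_diff_distrib)
  also have "\<dots> \<le> (t * M) * (K * C * M ^ s)"
    using \<open>y \<le> t * M\<close> w \<open>0 \<le> w\<close> y by (intro mult_mono) (auto simp: K_def)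
  also have "\<dots> = (t * K * C) * M ^ Suc s" by (simp add: algebra_simps)
  also have "\<dots> \<le> \<theta> * M ^ Suc s" using small(1) y by (intro mult_right_mono) (auto simp: K_def)
  finally show ?thesis .
qed

lemma edge_gap_bound:
  fixes g :: "real \<Rightarrow> real"
  assumes "M \<le> 1" and x: "0 \<le> x" "x \<le> M" and y: "0 \<le> y" "y \<le> M" and \<Lambda>: "\<Lambda> \<le> C * M ^ s"
    and "0 < \<alpha>" "0 \<le> B" "0 < t" "0 \<le> C"
    and err: "\<forall>z. 0 \<le> z \<and> z \<le> M \<longrightarrow> \<bar>g z - \<alpha> * z ^ d\<bar> \<le> B * z ^ Suc d"
    and bnd: "\<forall>z. 0 \<le> z \<and> z \<le> M \<longrightarrow> \<alpha>/2 * z ^ d \<le> g z \<and> g z \<le> 2 * \<alpha> * z ^ d"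
    and small: "2 * real (Suc s) * B * M \<le> \<theta>" "2 * \<alpha> * real (Suc s) * M \<le> \<theta>"
      "real (Suc s) * C * M < \<alpha>/2 * t ^ d" "t * real (Suc s) * C \<le> \<theta>"
  shows "y * (real (Suc s) * min (g x) \<Lambda> - g y) \<le> real s * (x * g x) + \<theta> * M ^ Suc s"
proof -
  define w where "w = real (Suc s) * min (g x) \<Lambda>"
  have wx: "w \<le> real (Suc s) * g x" unfolding w_def by (intro mult_left_mono) auto
  have "min (g x) \<Lambda> \<le> C * M ^ s" using \<Lambda> min.coboundedI2 by blast
  then have "w \<le> real (Suc s) * (C * M ^ s)" unfolding w_def by (intro mult_left_mono) auto
  then have w\<Lambda>: "w \<le> real (Suc s) * C * M ^ s" by (simp add: mult.assoc)
  have gx: "\<alpha>/2 * x ^ d \<le> g x" "g x \<le> 2 * \<alpha> * x ^ d" using bnd x by blast+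
  have gy: "\<alpha>/2 * y ^ d \<le> g y" using bnd y by blast
  have "0 \<le> \<alpha>/2 * x ^ d" "0 \<le> \<alpha>/2 * y ^ d" using x y \<open>0 < \<alpha>\<close> by simp_all
  then have "0 \<le> g x" "0 \<le> g y" using gx(1) gy by linarith+
  then have "0 \<le> real s * (x * g x)" using x by simp
  consider "d = s" | "s < d" | "d < s" by linarith
  then have "y * (w - g y) \<le> real s * (x * g x) + \<theta> * M ^ Suc s"
  proof cases
    case 1
    have "\<bar>g z - \<alpha> * z ^ d\<bar> \<le> B * z ^ Suc d" if "0 \<le> z" "z \<le> M" for z using err that by blast
    moreover have "w \<le> real (Suc d) * g x" using wx 1 by simp
    ultimately have "y * (w - g y) \<le> real d * (x * g x) + 2 * real (Suc d) * B * M * M ^ Suc d"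
      using x y by (intro gap_leading_degree[OF x y \<open>0 \<le> B\<close> less_imp_le[OF \<open>0 < \<alpha>\<close>]])
    also have "\<dots> \<le> real d * (x * g x) + \<theta> * M ^ Suc d"
      using small(1) x 1 by (intro add_left_mono mult_right_mono) auto
    finally show ?thesis using 1 by simp
  next
    case 2
    have "y * (w - g y) \<le> \<theta> * M ^ Suc s"
      by (rule gap_higher_degree[where g = g, OF 2 \<open>M \<le> 1\<close> x y less_imp_le[OF \<open>0 < \<alpha>\<close>] gx(2) \<open>0 \<le> g y\<close> wx small(2)])
    then show ?thesis using \<open>0 \<le> real s * (x * g x)\<close> by linarith
  next
    case 3
    have "y * (w - g y) \<le> \<theta> * M ^ Suc s"
      by (rule gap_lower_degree[where g = g, OF 3 \<open>M \<le> 1\<close> y \<open>0 < \<alpha>\<close> \<open>0 < t\<close> \<open>0 \<le> C\<close> gy w\<Lambda> small(4,3)])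
    then show ?thesis using \<open>0 \<le> real s * (x * g x)\<close> by linarith
  qed
  then show ?thesis unfolding w_def .
qed

lemma leading_term_gap:
  fixes g :: "real \<Rightarrow> real"
  assumes lead: "leading_term g \<alpha> d" and "0 < \<alpha>" "0 < \<theta>" "0 \<le> C"
  shows "\<forall>\<^sub>F M in at_right 0. \<forall>x y \<Lambda>. 0 \<le> x \<and> x \<le> M \<and> 0 \<le> y \<and> y \<le> M \<and> \<Lambda> \<le> C * M ^ s \<longrightarrow>
           y * (real (Suc s) * min (g x) \<Lambda> - g y) \<le> real s * (x * g x) + \<theta> * M ^ Suc s"
proof -
  obtain B \<rho> where "0 \<le> B" "0 < \<rho>"
    and B: "\<forall>y. 0 \<le> y \<and> y \<le> \<rho> \<longrightarrow> \<bar>g y - \<alpha> * y ^ d\<bar> \<le> B * y ^ Suc d"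
    using lead unfolding leading_term_def by blast
  define K where "K = real (Suc s)"
  define t where "t = \<theta> / (K * C + 1)"
  have "0 < K * C + 1" using \<open>0 \<le> C\<close> by (simp add: K_def add_nonneg_pos)
  then have "0 < t" using \<open>0 < \<theta>\<close> by (simp add: t_def)
  have "t * K * C = \<theta> * (K * C) / (K * C + 1)" by (simp add: t_def)
  also have "\<dots> \<le> \<theta>" using \<open>0 < K * C + 1\<close> \<open>0 < \<theta>\<close> by (simp add: divide_le_eq)
  finally have tK: "t * K * C \<le> \<theta>" .
  have ev: "\<forall>\<^sub>F M in at_right 0. c * M < \<epsilon>" if "0 < \<epsilon>" for c \<epsilon> :: real
    using that by (rule eventually_mult_less_at_right_0)
  have "0 < \<alpha>/2 * t ^ d" using \<open>0 < \<alpha>\<close> \<open>0 < t\<close> by simp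
  have "\<forall>\<^sub>F M in at_right 0. 1 * M < 1 \<and> 1 * M < \<rho> \<and> (2 * K * B) * M < \<theta> \<and>
      (2 * \<alpha> * K) * M < \<theta> \<and> (K * C) * M < \<alpha>/2 * t ^ d \<and>
      (\<forall>y. 0 \<le> y \<and> y \<le> M \<longrightarrow> \<alpha>/2 * y ^ d \<le> g y \<and> g y \<le> 2 * \<alpha> * y ^ d)"
    by (intro eventually_conj ev[OF zero_less_one] ev[OF \<open>0 < \<rho>\<close>]
        ev[OF \<open>0 < \<theta>\<close>] ev[OF \<open>0 < \<alpha>/2 * t ^ d\<close>] leading_term_bounds[OF lead \<open>0 < \<alpha>\<close>])
  then show ?thesis
  proof eventually_elim
    case (elim M)
    then have err: "\<forall>z. 0 \<le> z \<and> z \<le> M \<longrightarrow> \<bar>g z - \<alpha> * z ^ d\<bar> \<le> B * z ^ Suc d" using B by simp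
    show ?case
    proof (intro allI impI)
      fix x y \<Lambda> assume "0 \<le> x \<and> x \<le> M \<and> 0 \<le> y \<and> y \<le> M \<and> \<Lambda> \<le> C * M ^ s"
      with elim tK show "y * (real (Suc s) * min (g x) \<Lambda> - g y) \<le> real s * (x * g x) + \<theta> * M ^ Suc s"
        by (intro edge_gap_bound[where g = g, OF _ _ _ _ _ _ \<open>0 < \<alpha>\<close> \<open>0 \<le> B\<close> \<open>0 < t\<close> \<open>0 \<le> C\<close> err])
          (auto simp: K_def)
    qed
  qed
qed

section \<open>Equilibrium cost and social cost\<close>

definition eq_cost :: "'p set \<Rightarrow> ('p \<Rightarrow> 'e set) \<Rightarrow> ('e \<Rightarrow> real \<Rightarrow> real) \<Rightarrow> ('p \<Rightarrow> real) \<Rightarrow> real" where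
  "eq_cost P pe c f = (MIN p\<in>P. path_cost P pe c f p)"

lemma load_nonneg: "feasible P M g \<Longrightarrow> 0 \<le> load P pe g e"
  unfolding feasible_def load_def by (auto intro: sum_nonneg)

lemma load_le_demand: "finite P \<Longrightarrow> feasible P M g \<Longrightarrow> load P pe g e \<le> M"
  unfolding feasible_def load_def using sum_mono2[of P "{p\<in>P. e \<in> pe p}" g] by auto

lemma flow_le_load:
  "finite P \<Longrightarrow> feasible P M g \<Longrightarrow> p \<in> P \<Longrightarrow> e \<in> pe p \<Longrightarrow> g p \<le> load P pe g e"
  unfolding feasible_def load_def by (intro member_le_sum) auto

lemma sum_load_mult:
  assumes "finite P" "finite E" "\<forall>p\<in>P. pe p \<subseteq> E"
  shows "(\<Sum>e\<in>E. load P pe g e * h e) = (\<Sum>p\<in>P. g p * (\<Sum>e\<in>pe p. h e))"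
proof -
  have "(\<Sum>e\<in>E. load P pe g e * h e) = (\<Sum>e\<in>E. \<Sum>p\<in>P. if e \<in> pe p then g p * h e else 0)"
    unfolding load_def sum_distrib_right using assms(1) by (simp add: sum.inter_filter)
  also have "\<dots> = (\<Sum>p\<in>P. \<Sum>e\<in>E. if e \<in> pe p then g p * h e else 0)" by (rule sum.swap)
  also have "\<dots> = (\<Sum>p\<in>P. g p * (\<Sum>e\<in>pe p. h e))"
  proof (rule sum.cong[OF refl])
    fix p assume "p \<in> P"
    then have "{e\<in>E. e \<in> pe p} = pe p" using assms(3) by auto
    then show "(\<Sum>e\<in>E. if e \<in> pe p then g p * h e else 0) = g p * (\<Sum>e\<in>pe p. h e)"
      using assms(2) by (simp add: sum.inter_filter[symmetric] sum_distrib_left)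
  qed
  finally show ?thesis .
qed

lemma social_cost_nonneg:
  assumes "\<forall>e\<in>E. \<forall>x\<ge>0. 0 \<le> c e x" "feasible P M g"
  shows "0 \<le> social_cost E P pe c g"
  unfolding social_cost_def using assms load_nonneg[OF assms(2), of pe]
  by (intro sum_nonneg mult_nonneg_nonneg) auto

lemma opt_cost_le_social_cost:
  assumes "\<forall>e\<in>E. \<forall>x\<ge>0. 0 \<le> c e x" "feasible P M g"
  shows "opt_cost E P pe c M \<le> social_cost E P pe c g"
  unfolding opt_cost_def using assms social_cost_nonneg[OF assms(1)]
  by (intro cInf_lower bdd_belowI[of _ 0]) auto

lemma eq_cost_le_path_cost: "finite P \<Longrightarrow> p \<in> P \<Longrightarrow> eq_cost P pe c f \<le> path_cost P pe c f p"
  unfolding eq_cost_def by (rule Min_le) auto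

lemma path_cost_nonneg:
  assumes "pe p \<subseteq> E" "\<forall>e\<in>E. \<forall>x\<ge>0. 0 \<le> c e x" "feasible P M f"
  shows "0 \<le> path_cost P pe c f p"
  unfolding path_cost_def using assms load_nonneg[OF assms(3), of pe] by (intro sum_nonneg) blast

lemma eq_cost_nonneg:
  assumes "finite P" "P \<noteq> {}" "\<forall>p\<in>P. pe p \<subseteq> E" "\<forall>e\<in>E. \<forall>x\<ge>0. 0 \<le> c e x" "feasible P M f"
  shows "0 \<le> eq_cost P pe c f"
  unfolding eq_cost_def using assms path_cost_nonneg[OF _ assms(4,5)] by (subst Min_ge_iff) auto

lemma wardrop_path_cost:
  assumes "finite P" "wardrop_eq P pe c M f" "p \<in> P" "0 < f p"
  shows "path_cost P pe c f p = eq_cost P pe c f"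
proof -
  have "path_cost P pe c f p \<le> eq_cost P pe c f"
    unfolding eq_cost_def using assms by (subst Min_ge_iff) (auto simp: wardrop_eq_def)
  then show ?thesis using eq_cost_le_path_cost[OF assms(1,3), of pe c f] by linarith
qed

lemma social_cost_wardrop:
  assumes "finite P" "finite E" "\<forall>p\<in>P. pe p \<subseteq> E" "wardrop_eq P pe c M f"
  shows "social_cost E P pe c f = eq_cost P pe c f * M"
proof -
  have f: "\<forall>p\<in>P. 0 \<le> f p" "(\<Sum>p\<in>P. f p) = M" using assms(4) by (auto simp: wardrop_eq_def feasible_def)
  have "social_cost E P pe c f = (\<Sum>p\<in>P. f p * path_cost P pe c f p)"
    unfolding social_cost_def path_cost_def by (rule sum_load_mult[OF assms(1-3)])
  also have "\<dots> = (\<Sum>p\<in>P. f p * eq_cost P pe c f)"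
    using wardrop_path_cost[OF assms(1,4)] f(1) by (intro sum.cong) (auto simp: less_le)
  also have "\<dots> = (\<Sum>p\<in>P. f p) * eq_cost P pe c f" by (rule sum_distrib_right[symmetric])
  finally show ?thesis using f(2) by simp
qed

lemma feasible_obtain_heavy_path:
  assumes "finite P" "P \<noteq> {}" "feasible P M f"
  obtains p where "p \<in> P" "M / real (card P) \<le> f p"
proof (rule ccontr)
  assume "\<not> thesis"
  with that have "\<forall>p\<in>P. f p < M / real (card P)" by (meson not_le)
  then have "(\<Sum>p\<in>P. f p) < (\<Sum>p\<in>P. M / real (card P))"
    using assms(1,2) by (intro sum_strict_mono) auto
  then show False using assms by (simp add: feasible_def)
qed

text \<open>Truncating the edge costs at the equilibrium cost keeps every path at cost at least eq_cost,
  because a path whose edges are all untruncated has its full equilibrium path cost.\<close>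
lemma wardrop_truncated_variational_ineq:
  assumes "finite P" "finite E" "\<forall>p\<in>P. pe p \<subseteq> E" "\<forall>e\<in>E. \<forall>x\<ge>0. 0 \<le> c e x"
    and "wardrop_eq P pe c M f" "feasible P M g"
  defines "\<Lambda> \<equiv> eq_cost P pe c f"
  shows "\<Lambda> * M \<le> (\<Sum>e\<in>E. load P pe g e * min (c e (load P pe f e)) \<Lambda>)"
proof -
  have ff: "feasible P M f" using assms(5) by (simp add: wardrop_eq_def)
  have c0: "0 \<le> c e (load P pe f e)" if "e \<in> E" for e
    using assms(4) load_nonneg[OF ff, of pe] that by blast
  have path: "\<Lambda> \<le> (\<Sum>e\<in>pe p. min (c e (load P pe f e)) \<Lambda>)" if p: "p \<in> P" for p
  proof (cases "\<exists>e\<in>pe p. \<Lambda> \<le> c e (load P pe f e)")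
    case True
    then obtain e where e: "e \<in> pe p" "\<Lambda> \<le> c e (load P pe f e)" by blast
    have "0 \<le> \<Lambda>" unfolding \<Lambda>_def using assms(1,3,4) ff p by (intro eq_cost_nonneg) auto
    have "finite (pe p)" using p assms(2,3) finite_subset by blast
    then have "min (c e (load P pe f e)) \<Lambda> \<le> (\<Sum>e\<in>pe p. min (c e (load P pe f e)) \<Lambda>)"
      using e c0 p assms(3) \<open>0 \<le> \<Lambda>\<close> by (intro member_le_sum) auto
    then show ?thesis using e by simp
  next
    case False
    then have "(\<Sum>e\<in>pe p. min (c e (load P pe f e)) \<Lambda>) = path_cost P pe c f p"
      unfolding path_cost_def by (intro sum.cong) auto
    then show ?thesis using eq_cost_le_path_cost[OF assms(1) p] by (simp add: \<Lambda>_def)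
  qed
  have g: "\<forall>p\<in>P. 0 \<le> g p" "(\<Sum>p\<in>P. g p) = M" using assms(6) by (auto simp: feasible_def)
  have "\<Lambda> * M = (\<Sum>p\<in>P. g p) * \<Lambda>" using g(2) by simp
  also have "\<dots> = (\<Sum>p\<in>P. g p * \<Lambda>)" by (rule sum_distrib_right)
  also have "\<dots> \<le> (\<Sum>p\<in>P. g p * (\<Sum>e\<in>pe p. min (c e (load P pe f e)) \<Lambda>))"
    using path g(1) by (intro sum_mono mult_left_mono) auto
  also have "\<dots> = (\<Sum>e\<in>E. load P pe g e * min (c e (load P pe f e)) \<Lambda>)"
    by (rule sum_load_mult[OF assms(1-3), symmetric])
  finally show ?thesis .
qed

lemma social_cost_lower_bound:
  assumes fin: "finite P" "finite E" "\<forall>p\<in>P. pe p \<subseteq> E" and nn: "\<forall>e\<in>E. \<forall>x\<ge>0. 0 \<le> c e x"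
    and W: "wardrop_eq P pe c M f" and g: "feasible P M g"
    and gap: "\<forall>e\<in>E. \<forall>x y. 0 \<le> x \<and> x \<le> M \<and> 0 \<le> y \<and> y \<le> M \<longrightarrow>
                y * (real (Suc s) * min (c e x) (eq_cost P pe c f) - c e y) \<le> real s * (x * c e x) + r"
  shows "eq_cost P pe c f * M - real (card E) * r \<le> social_cost E P pe c g"
proof -
  define \<Lambda> x y where "\<Lambda> = eq_cost P pe c f" and "x = load P pe f" and "y = load P pe g"
  define K where "K = real (Suc s)"
  have "(\<Sum>e\<in>E. y e * (K * min (c e (x e)) \<Lambda> - c e (y e))) \<le> (\<Sum>e\<in>E. real s * (x e * c e (x e)) + r)"
  proof (rule sum_mono)
    fix e assume "e \<in> E"
    moreover have "0 \<le> x e" "x e \<le> M" "0 \<le> y e" "y e \<le> M"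
      using W g load_nonneg load_le_demand[OF fin(1)] by (auto simp: x_def y_def wardrop_eq_def)
    ultimately show "y e * (K * min (c e (x e)) \<Lambda> - c e (y e)) \<le> real s * (x e * c e (x e)) + r"
      using gap by (simp add: \<Lambda>_def K_def)
  qed
  also have "\<dots> = real s * social_cost E P pe c f + real (card E) * r"
    by (simp add: sum.distrib sum_distrib_left social_cost_def x_def)
  also have "\<dots> = real s * (\<Lambda> * M) + real (card E) * r"
    using social_cost_wardrop[OF fin W] by (simp add: \<Lambda>_def)
  finally have upper: "(\<Sum>e\<in>E. y e * (K * min (c e (x e)) \<Lambda> - c e (y e))) \<le> real s * (\<Lambda> * M) + real (card E) * r" .
  have lower: "K * (\<Lambda> * M) \<le> K * (\<Sum>e\<in>E. y e * min (c e (x e)) \<Lambda>)"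
    using wardrop_truncated_variational_ineq[OF fin nn W g] by (simp add: K_def x_def y_def \<Lambda>_def)
  have "social_cost E P pe c g = K * (\<Sum>e\<in>E. y e * min (c e (x e)) \<Lambda>)
      - (\<Sum>e\<in>E. y e * (K * min (c e (x e)) \<Lambda> - c e (y e)))"
    by (simp add: social_cost_def y_def sum_distrib_left sum_subtractf algebra_simps)
  with upper lower show ?thesis by (simp add: K_def \<Lambda>_def algebra_simps)
qed

lemma single_path_flow:
  assumes "finite P" "p0 \<in> P" "0 \<le> M"
  shows "feasible P M (\<lambda>p. if p = p0 then M else 0)"
    and "load P pe (\<lambda>p. if p = p0 then M else 0) e = (if e \<in> pe p0 then M else 0)"
  using assms by (auto simp: feasible_def load_def sum.delta')

lemma poa_eq_one_if_zero_cost_flow: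
  assumes "\<forall>e\<in>E. \<forall>x\<ge>0. 0 \<le> c e x" "feasible P M g" "social_cost E P pe c g = 0"
  shows "poa E P pe c M f = 1"
  using opt_cost_le_social_cost[OF assms(1,2), of pe] assms(3) by (simp add: poa_def)

lemma poa_near_one:
  assumes nn: "\<forall>e\<in>E. \<forall>x\<ge>0. 0 \<le> c e x" and f: "feasible P M f"
    and pos: "0 < social_cost E P pe c f" and \<eta>: "0 \<le> \<eta>" "\<eta> \<le> 1/2"
    and near: "\<forall>g. feasible P M g \<longrightarrow> (1 - \<eta>) * social_cost E P pe c f \<le> social_cost E P pe c g"
  shows "\<bar>poa E P pe c M f - 1\<bar> \<le> 2 * \<eta>"
proof -
  define L Opt where "L = social_cost E P pe c f" and "Opt = opt_cost E P pe c M"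
  have "(1 - \<eta>) * L \<le> Opt"
    unfolding Opt_def opt_cost_def L_def using f near by (intro cInf_greatest) auto
  moreover have "Opt \<le> L" unfolding Opt_def L_def by (rule opt_cost_le_social_cost[OF nn f])
  moreover have "0 < (1 - \<eta>) * L" using pos \<eta> by (simp add: L_def)
  ultimately have "0 < Opt" "1 \<le> L / Opt" "L / Opt \<le> 1 / (1 - \<eta>)"
    using \<eta> by (auto simp: field_simps)
  moreover have "\<eta> * (2 * \<eta>) \<le> \<eta>" using \<eta> mult_left_mono[of "2 * \<eta>" 1 \<eta>] by simp
  then have "1 / (1 - \<eta>) - 1 \<le> 2 * \<eta>" using \<eta> by (simp add: field_simps)
  ultimately show ?thesis by (simp add: poa_def L_def Opt_def)
qed

section \<open>Small demand\<close>

lemma vanishes_near_zero_eventually: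
  assumes "vanishes_near_zero g"
  shows "\<forall>\<^sub>F M in at_right 0. \<forall>y. 0 \<le> y \<and> y \<le> M \<longrightarrow> g y = 0"
proof -
  obtain \<rho> where "0 < \<rho>" and \<rho>: "\<forall>y. 0 \<le> y \<and> y \<le> \<rho> \<longrightarrow> g y = 0"
    using assms unfolding vanishes_near_zero_def by blast
  have "\<forall>\<^sub>F M in at_right 0. 1 * M < \<rho>" using \<open>0 < \<rho>\<close> by (rule eventually_mult_less_at_right_0)
  then show ?thesis by eventually_elim (use \<rho> in auto)
qed

lemma obtain_max_min:
  fixes D :: "'a \<Rightarrow> 'b::linorder set"
  assumes "finite P" "P \<noteq> {}" "\<forall>p\<in>P. finite (D p) \<and> D p \<noteq> {}"
  obtains s p0 where "p0 \<in> P" "\<forall>k\<in>D p0. s \<le> k" "\<forall>p\<in>P. \<exists>k\<in>D p. k \<le> s"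
proof -
  have "Max ((\<lambda>p. Min (D p)) ` P) \<in> (\<lambda>p. Min (D p)) ` P" using assms(1,2) by (intro Max_in) auto
  then obtain p0 where p0: "p0 \<in> P" "Min (D p0) = Max ((\<lambda>p. Min (D p)) ` P)" by auto
  show ?thesis
  proof (rule that[OF p0(1)])
    show "\<forall>k\<in>D p0. Min (D p0) \<le> k" using assms(3) p0(1) by simp
    show "\<forall>p\<in>P. \<exists>k\<in>D p. k \<le> Min (D p0)"
      using assms p0(2) by (metis (mono_tags, lifting) Max_ge Min_in finite_imageI image_eqI)
  qed
qed

lemma eq_cost_upper_bound:
  assumes "finite P" "p0 \<in> P" "finite (pe p0)" "pe p0 \<subseteq> E" "feasible P M f" "M \<le> 1"
    and zero: "\<forall>e\<in>Z. \<forall>y. 0 \<le> y \<and> y \<le> M \<longrightarrow> c e y = 0"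
    and bnd: "\<forall>e\<in>E - Z. 0 \<le> \<alpha> e \<and> (\<forall>y. 0 \<le> y \<and> y \<le> M \<longrightarrow> c e y \<le> 2 * \<alpha> e * y ^ d e)"
    and deg: "\<forall>e\<in>pe p0 - Z. s \<le> d e"
  shows "eq_cost P pe c f \<le> (\<Sum>e\<in>pe p0 - Z. 2 * \<alpha> e) * M ^ s"
proof -
  define x where "x = load P pe f"
  have x: "0 \<le> x e" "x e \<le> M" for e
    using load_nonneg[OF assms(5)] load_le_demand[OF assms(1,5)] by (auto simp: x_def)
  then have "0 \<le> M" by (meson order_trans)
  have "eq_cost P pe c f \<le> (\<Sum>e\<in>pe p0. c e (x e))"
    using eq_cost_le_path_cost[OF assms(1,2)] by (simp add: path_cost_def x_def)
  also have "\<dots> = (\<Sum>e\<in>pe p0 \<inter> Z. c e (x e)) + (\<Sum>e\<in>pe p0 - Z. c e (x e))"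
    using assms(3) by (rule sum.Int_Diff)
  also have "(\<Sum>e\<in>pe p0 \<inter> Z. c e (x e)) = 0" using zero x by (intro sum.neutral) auto
  also have "(\<Sum>e\<in>pe p0 - Z. c e (x e)) \<le> (\<Sum>e\<in>pe p0 - Z. 2 * \<alpha> e * M ^ s)"
  proof (rule sum_mono)
    fix e assume e: "e \<in> pe p0 - Z"
    then have "0 \<le> \<alpha> e" and ce: "c e (x e) \<le> 2 * \<alpha> e * x e ^ d e" using bnd assms(4) x by blast+
    have "x e ^ d e \<le> M ^ d e" using x by (intro power_mono)
    also have "\<dots> \<le> M ^ s" using deg e \<open>0 \<le> M\<close> assms(6) by (intro power_decreasing) auto
    finally show "c e (x e) \<le> 2 * \<alpha> e * M ^ s" using ce \<open>0 \<le> \<alpha> e\<close> by (meson mult_left_mono order_trans zero_le_mult_iff zero_le_numeral)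
  qed
  finally show ?thesis by (simp add: sum_distrib_right)
qed

lemma eq_cost_lower_bound:
  assumes fin: "finite P" "P \<noteq> {}" "finite E" "\<forall>p\<in>P. pe p \<subseteq> E"
    and nn: "\<forall>e\<in>E. \<forall>x\<ge>0. 0 \<le> c e x" and W: "wardrop_eq P pe c M f" and "0 < M" "M \<le> 1"
    and cut: "\<forall>p\<in>P. \<exists>e\<in>pe p - Z. d e \<le> s"
    and bnd: "\<forall>e\<in>E - Z. a \<le> \<alpha> e \<and> (\<forall>y. 0 \<le> y \<and> y \<le> M \<longrightarrow> \<alpha> e / 2 * y ^ d e \<le> c e y)"
    and "0 \<le> a"
  shows "a / 2 / real (card P) ^ s * M ^ s \<le> eq_cost P pe c f"
proof -
  define n x where "n = real (card P)" and "x = load P pe f"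
  have "1 \<le> n" using fin by (simp add: n_def Suc_le_eq card_gt_0_iff)
  have ff: "feasible P M f" using W by (simp add: wardrop_eq_def)
  obtain p where p: "p \<in> P" "M / n \<le> f p"
    using feasible_obtain_heavy_path[OF fin(1,2) ff] by (auto simp: n_def)
  have "0 < M / n" using \<open>0 < M\<close> \<open>1 \<le> n\<close> by simp
  obtain e where e: "e \<in> pe p" "e \<notin> Z" "d e \<le> s" using cut p(1) by blast
  have eE: "e \<in> E - Z" using e p(1) fin(4) by auto
  then have "a \<le> \<alpha> e" using bnd by blast
  have "M / n \<le> x e" using p flow_le_load[of P M f p e pe, OF fin(1) ff p(1) e(1)] by (simp add: x_def)
  have "a / 2 / n ^ s * M ^ s = a / 2 * (M / n) ^ s" by (simp add: power_divide)
  also have "\<dots> \<le> a / 2 * (M / n) ^ d e"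
    using e \<open>0 < M / n\<close> \<open>M \<le> 1\<close> \<open>1 \<le> n\<close> \<open>0 \<le> a\<close>
    by (intro mult_left_mono power_decreasing) (auto simp: divide_le_eq)
  also have "\<dots> \<le> \<alpha> e / 2 * x e ^ d e"
    using \<open>a \<le> \<alpha> e\<close> \<open>M / n \<le> x e\<close> \<open>0 < M / n\<close> \<open>0 \<le> a\<close>
    by (intro mult_mono power_mono divide_right_mono) auto
  also have "\<dots> \<le> c e (x e)"
  proof -
    have "0 \<le> x e" "x e \<le> M"
      using \<open>M / n \<le> x e\<close> \<open>0 < M / n\<close> load_le_demand[OF fin(1) ff, of pe e] by (auto simp: x_def)
    then show ?thesis using bnd eE by blast
  qed
  also have "\<dots> \<le> path_cost P pe c f p"
    unfolding path_cost_def x_def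
  proof (rule member_le_sum)
    show "finite (pe p)" using p(1) fin(3,4) finite_subset by blast
    show "0 \<le> c i (load P pe f i)" if "i \<in> pe p - {e}" for i
      using that p(1) fin(4) nn load_nonneg[OF ff, of pe i] by blast
  qed (rule e(1))
  also have "\<dots> = eq_cost P pe c f"
    using wardrop_path_cost[OF fin(1) W p(1)] p(2) \<open>0 < M / n\<close> by simp
  finally show ?thesis by (simp add: n_def)
qed

lemma edge_gap_vanishing:
  assumes zero: "\<forall>e\<in>Z. \<forall>y. 0 \<le> y \<and> y \<le> M \<longrightarrow> c e y = 0"
    and gap: "\<forall>e\<in>E - Z. \<forall>x y \<Lambda>. 0 \<le> x \<and> x \<le> M \<and> 0 \<le> y \<and> y \<le> M \<and> \<Lambda> \<le> U \<longrightarrow>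
                y * (real (Suc s) * min (c e x) \<Lambda> - c e y) \<le> real s * (x * c e x) + r"
    and "\<Lambda> \<le> U" "0 \<le> r"
  shows "\<forall>e\<in>E. \<forall>x y. 0 \<le> x \<and> x \<le> M \<and> 0 \<le> y \<and> y \<le> M \<longrightarrow>
           y * (real (Suc s) * min (c e x) \<Lambda> - c e y) \<le> real s * (x * c e x) + r"
proof (intro ballI allI impI)
  fix e x y assume "e \<in> E" and xy: "0 \<le> x \<and> x \<le> M \<and> 0 \<le> y \<and> y \<le> M"
  show "y * (real (Suc s) * min (c e x) \<Lambda> - c e y) \<le> real s * (x * c e x) + r"
  proof (cases "e \<in> Z")
    case True
    then have "c e x = 0" "c e y = 0" using zero xy by auto
    moreover have "y * (real (Suc s) * min 0 \<Lambda>) \<le> 0"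
      using xy by (intro mult_nonneg_nonpos) (auto simp: mult_nonneg_nonpos)
    ultimately show ?thesis using \<open>0 \<le> r\<close> by simp
  next
    case False
    then show ?thesis using \<open>e \<in> E\<close> xy \<open>\<Lambda> \<le> U\<close> by (intro gap[rule_format]) auto
  qed
qed

lemma wardrop_near_optimal:
  assumes fin: "finite E" "finite P" "P \<noteq> {}" "\<forall>p\<in>P. pe p \<subseteq> E"
    and nn: "\<forall>e\<in>E. \<forall>x\<ge>0. 0 \<le> c e x" and W: "wardrop_eq P pe c M f" and "0 < M" "M \<le> 1"
    and p0: "p0 \<in> P" "\<forall>e\<in>pe p0 - Z. s \<le> d e" and cut: "\<forall>p\<in>P. \<exists>e\<in>pe p - Z. d e \<le> s"
    and zero: "\<forall>e\<in>Z. \<forall>y. 0 \<le> y \<and> y \<le> M \<longrightarrow> c e y = 0"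
    and bnd: "\<forall>e\<in>E - Z. a \<le> \<alpha> e \<and>
                (\<forall>y. 0 \<le> y \<and> y \<le> M \<longrightarrow> \<alpha> e / 2 * y ^ d e \<le> c e y \<and> c e y \<le> 2 * \<alpha> e * y ^ d e)"
    and "0 < a"
    and gap: "\<forall>e\<in>E - Z. \<forall>x y \<Lambda>. 0 \<le> x \<and> x \<le> M \<and> 0 \<le> y \<and> y \<le> M \<and>
                \<Lambda> \<le> (\<Sum>e\<in>pe p0 - Z. 2 * \<alpha> e) * M ^ s \<longrightarrow>
                y * (real (Suc s) * min (c e x) \<Lambda> - c e y) \<le> real s * (x * c e x) + \<theta> * M ^ Suc s"
    and \<theta>: "0 \<le> \<theta>" "real (card E) * \<theta> \<le> \<eta> * (a / 2 / real (card P) ^ s)" and "0 \<le> \<eta>"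
  shows "0 < social_cost E P pe c f \<and>
    (\<forall>g. feasible P M g \<longrightarrow> (1 - \<eta>) * social_cost E P pe c f \<le> social_cost E P pe c g)"
proof -
  define \<Lambda> where "\<Lambda> = eq_cost P pe c f"
  have ff: "feasible P M f" using W by (simp add: wardrop_eq_def)
  have pe0: "pe p0 \<subseteq> E" using fin(4) p0(1) by blast
  have "\<forall>e\<in>E - Z. 0 \<le> \<alpha> e \<and> (\<forall>y. 0 \<le> y \<and> y \<le> M \<longrightarrow> c e y \<le> 2 * \<alpha> e * y ^ d e)"
    using bnd \<open>0 < a\<close> by (auto intro: order_trans[OF less_imp_le[OF \<open>0 < a\<close>]])
  then have upper: "\<Lambda> \<le> (\<Sum>e\<in>pe p0 - Z. 2 * \<alpha> e) * M ^ s" unfolding \<Lambda>_def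
    by (rule eq_cost_upper_bound[where pe = pe, OF fin(2) p0(1) finite_subset[OF pe0 fin(1)] pe0 ff \<open>M \<le> 1\<close> zero _ p0(2)])
  have lower: "a / 2 / real (card P) ^ s * M ^ s \<le> \<Lambda>"
    unfolding \<Lambda>_def using bnd \<open>0 < a\<close>
    by (intro eq_cost_lower_bound[where \<alpha> = \<alpha>, OF fin(2,3,1,4) nn W \<open>0 < M\<close> \<open>M \<le> 1\<close> cut]) auto
  have "0 < a / 2 / real (card P) ^ s * M ^ s"
    using \<open>0 < a\<close> \<open>0 < M\<close> fin(2,3) by (simp add: card_gt_0_iff)
  then have "0 < \<Lambda> * M" using lower \<open>0 < M\<close> by simp
  moreover have Lf: "social_cost E P pe c f = \<Lambda> * M" unfolding \<Lambda>_def by (rule social_cost_wardrop[OF fin(2,1,4) W])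
  moreover have "(1 - \<eta>) * (\<Lambda> * M) \<le> social_cost E P pe c g" if g: "feasible P M g" for g
  proof -
    have "0 \<le> \<theta> * M ^ Suc s" using \<theta>(1) \<open>0 < M\<close> by simp
    with zero gap upper have "\<forall>e\<in>E. \<forall>x y. 0 \<le> x \<and> x \<le> M \<and> 0 \<le> y \<and> y \<le> M \<longrightarrow>
        y * (real (Suc s) * min (c e x) \<Lambda> - c e y) \<le> real s * (x * c e x) + \<theta> * M ^ Suc s"
      by (rule edge_gap_vanishing)
    then have "\<Lambda> * M - real (card E) * (\<theta> * M ^ Suc s) \<le> social_cost E P pe c g"
      unfolding \<Lambda>_def by (rule social_cost_lower_bound[OF fin(2,1,4) nn W g])
    moreover have "real (card E) * (\<theta> * M ^ Suc s) \<le> \<eta> * (\<Lambda> * M)"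
    proof -
      have "real (card E) * (\<theta> * M ^ Suc s) = (real (card E) * \<theta>) * M ^ s * M" by (simp add: algebra_simps)
      also have "\<dots> \<le> \<eta> * (a / 2 / real (card P) ^ s) * M ^ s * M"
        using \<theta> \<open>0 < M\<close> by (intro mult_right_mono) auto
      also have "\<dots> = \<eta> * ((a / 2 / real (card P) ^ s * M ^ s) * M)" by (simp add: algebra_simps)
      also have "\<dots> \<le> \<eta> * (\<Lambda> * M)"
        using lower \<open>0 \<le> \<eta>\<close> \<open>0 < M\<close> by (intro mult_left_mono mult_right_mono) auto
      finally show ?thesis .
    qed
    ultimately show ?thesis by (simp add: algebra_simps)
  qed
  ultimately show ?thesis by simp
qed

lemma wardrop_near_optimal_eventually:
  assumes fin: "finite E" "finite P" "P \<noteq> {}" "\<forall>p\<in>P. pe p \<subseteq> E"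
    and nn: "\<forall>e\<in>E. \<forall>x\<ge>0. 0 \<le> c e x"
    and Z: "Z \<subseteq> E" "\<forall>e\<in>Z. vanishes_near_zero (c e)"
    and lead: "\<forall>e\<in>E - Z. 0 < \<alpha> e \<and> leading_term (c e) (\<alpha> e) (d e)"
    and p0: "p0 \<in> P" "\<forall>e\<in>pe p0 - Z. s \<le> d e" and cut: "\<forall>p\<in>P. \<exists>e\<in>pe p - Z. d e \<le> s"
    and "0 < \<eta>"
  shows "\<forall>\<^sub>F M in at_right 0. \<forall>f. wardrop_eq P pe c M f \<longrightarrow> 0 < social_cost E P pe c f \<and>
           (\<forall>g. feasible P M g \<longrightarrow> (1 - \<eta>) * social_cost E P pe c f \<le> social_cost E P pe c g)"
proof -
  define C where "C = (\<Sum>e\<in>pe p0 - Z. 2 * \<alpha> e)"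
  define a where "a = Min (insert 1 (\<alpha> ` (E - Z)))"
  define \<theta> where "\<theta> = \<eta> * (a / 2 / real (card P) ^ s) / (real (card E) + 1)"
  have "0 \<le> C" unfolding C_def
  proof (rule sum_nonneg)
    fix e assume "e \<in> pe p0 - Z"
    then have "e \<in> E - Z" using fin(4) p0(1) by blast
    then show "0 \<le> 2 * \<alpha> e" using lead by (simp add: less_imp_le)
  qed
  have "0 < a" "\<forall>e\<in>E - Z. a \<le> \<alpha> e" using fin(1) lead by (auto simp: a_def)
  then have "0 < \<theta>" using \<open>0 < \<eta>\<close> fin(2,3) by (simp add: \<theta>_def card_gt_0_iff)
  have "real (card E) * \<theta> = \<eta> * (a / 2 / real (card P) ^ s) * (real (card E) / (real (card E) + 1))"
    by (simp add: \<theta>_def)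
  also have "\<dots> \<le> \<eta> * (a / 2 / real (card P) ^ s)"
    using \<open>0 < a\<close> \<open>0 < \<eta>\<close> by (intro mult_left_le) auto
  finally have "real (card E) * \<theta> \<le> \<eta> * (a / 2 / real (card P) ^ s)" .
  have "finite Z" "finite (E - Z)" using fin(1) Z(1) finite_subset by auto
  have "\<forall>\<^sub>F M in at_right 0. \<forall>e\<in>Z. \<forall>y. 0 \<le> y \<and> y \<le> M \<longrightarrow> c e y = 0"
    using \<open>finite Z\<close> Z(2) vanishes_near_zero_eventually by (intro eventually_ball_finite) auto
  moreover have "\<forall>\<^sub>F M in at_right 0. \<forall>e\<in>E - Z. \<forall>y. 0 \<le> y \<and> y \<le> M \<longrightarrow>
      \<alpha> e / 2 * y ^ d e \<le> c e y \<and> c e y \<le> 2 * \<alpha> e * y ^ d e"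
    using \<open>finite (E - Z)\<close> lead leading_term_bounds by (intro eventually_ball_finite) auto
  moreover have "\<forall>\<^sub>F M in at_right 0. \<forall>e\<in>E - Z. \<forall>x y \<Lambda>. 0 \<le> x \<and> x \<le> M \<and> 0 \<le> y \<and> y \<le> M \<and>
      \<Lambda> \<le> C * M ^ s \<longrightarrow> y * (real (Suc s) * min (c e x) \<Lambda> - c e y) \<le> real s * (x * c e x) + \<theta> * M ^ Suc s"
  proof (intro eventually_ball_finite[OF \<open>finite (E - Z)\<close>] ballI)
    fix e assume "e \<in> E - Z"
    with lead show "\<forall>\<^sub>F M in at_right 0. \<forall>x y \<Lambda>. 0 \<le> x \<and> x \<le> M \<and> 0 \<le> y \<and> y \<le> M \<and> \<Lambda> \<le> C * M ^ s \<longrightarrow>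
        y * (real (Suc s) * min (c e x) \<Lambda> - c e y) \<le> real s * (x * c e x) + \<theta> * M ^ Suc s"
      using leading_term_gap[OF _ _ \<open>0 < \<theta>\<close> \<open>0 \<le> C\<close>, of "c e" "\<alpha> e" "d e" s] by blast
  qed
  moreover have "\<forall>\<^sub>F M in at_right 0. 1 * M < (1::real)" by (rule eventually_mult_less_at_right_0) simp
  moreover note eventually_at_right_less
  ultimately show ?thesis
  proof eventually_elim
    case (elim M)
    show ?case
    proof (intro allI impI)
      fix f assume W: "wardrop_eq P pe c M f"
      show "0 < social_cost E P pe c f \<and>
          (\<forall>g. feasible P M g \<longrightarrow> (1 - \<eta>) * social_cost E P pe c f \<le> social_cost E P pe c g)"
        by (rule wardrop_near_optimal[where a = a and \<alpha> = \<alpha> and d = d and \<theta> = \<theta>, OF fin nn W _ _ p0 cut])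
          (use elim \<open>0 < a\<close> \<open>\<forall>e\<in>E - Z. a \<le> \<alpha> e\<close> \<open>0 < \<theta>\<close> \<open>real (card E) * \<theta> \<le> _\<close> \<open>0 < \<eta>\<close>
            in \<open>auto simp: C_def\<close>)
    qed
  qed
qed

lemma poa_eventually_one_of_vanishing_path:
  assumes fin: "finite E" "finite P" "\<forall>p\<in>P. pe p \<subseteq> E" and nn: "\<forall>e\<in>E. \<forall>x\<ge>0. 0 \<le> c e x"
    and p0: "p0 \<in> P" "\<forall>e\<in>pe p0. vanishes_near_zero (c e)"
  shows "\<forall>\<^sub>F M in at_right 0. \<forall>f. poa E P pe c M f = 1"
proof -
  have "finite (pe p0)" using fin p0(1) finite_subset by blast
  then have "\<forall>\<^sub>F M in at_right 0. \<forall>e\<in>pe p0. \<forall>y. 0 \<le> y \<and> y \<le> M \<longrightarrow> c e y = 0"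
    using p0(2) vanishes_near_zero_eventually by (intro eventually_ball_finite) auto
  with eventually_at_right_less show ?thesis
  proof eventually_elim
    case (elim M)
    then have "0 \<le> M" by simp
    define g where "g p = (if p = p0 then M else 0)" for p
    have "feasible P M g" unfolding g_def by (rule single_path_flow(1)[OF fin(2) p0(1) \<open>0 \<le> M\<close>])
    moreover have "social_cost E P pe c g = 0"
      unfolding social_cost_def g_def single_path_flow(2)[OF fin(2) p0(1) \<open>0 \<le> M\<close>]
      using elim by (intro sum.neutral) auto
    ultimately show ?case using poa_eq_one_if_zero_cost_flow[OF nn] by blast
  qed
qed

lemma poa_eventually_near_one:
  assumes fin: "finite E" "finite P" "P \<noteq> {}" "\<forall>p\<in>P. pe p \<subseteq> E"
    and nn: "\<forall>e\<in>E. \<forall>x\<ge>0. 0 \<le> c e x"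
    and Z: "Z \<subseteq> E" "\<forall>e\<in>Z. vanishes_near_zero (c e)"
    and lead: "\<forall>e\<in>E - Z. 0 < \<alpha> e \<and> leading_term (c e) (\<alpha> e) (d e)"
    and no_vanishing_path: "\<forall>p\<in>P. \<not> pe p \<subseteq> Z" and "0 < \<epsilon>"
  shows "\<forall>\<^sub>F M in at_right 0. \<forall>f. wardrop_eq P pe c M f \<longrightarrow> \<bar>poa E P pe c M f - 1\<bar> < \<epsilon>"
proof -
  have "\<forall>p\<in>P. finite (d ` (pe p - Z)) \<and> d ` (pe p - Z) \<noteq> {}"
  proof
    fix p assume "p \<in> P"
    then have "finite (pe p)" using fin(1,4) finite_subset by blast
    then show "finite (d ` (pe p - Z)) \<and> d ` (pe p - Z) \<noteq> {}" using no_vanishing_path \<open>p \<in> P\<close> by auto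
  qed
  then obtain s p0 where "p0 \<in> P" "\<forall>k\<in>d ` (pe p0 - Z). s \<le> k" "\<forall>p\<in>P. \<exists>k\<in>d ` (pe p - Z). k \<le> s"
    by (rule obtain_max_min[OF fin(2,3)])
  then have p0: "p0 \<in> P" "\<forall>e\<in>pe p0 - Z. s \<le> d e" and cut: "\<forall>p\<in>P. \<exists>e\<in>pe p - Z. d e \<le> s"
    by auto
  define \<eta> where "\<eta> = min (\<epsilon> / 4) (1 / 2)"
  have "0 < \<eta>" using \<open>0 < \<epsilon>\<close> by (simp add: \<eta>_def)
  from wardrop_near_optimal_eventually[OF fin nn Z lead p0 cut this]
  show ?thesis
  proof eventually_elim
    case (elim M)
    show ?case
    proof (intro allI impI)
      fix f assume "wardrop_eq P pe c M f"
      then have "\<bar>poa E P pe c M f - 1\<bar> \<le> 2 * \<eta>"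
        using elim \<open>0 < \<eta>\<close> by (intro poa_near_one[OF nn]) (auto simp: wardrop_eq_def \<eta>_def)
      then show "\<bar>poa E P pe c M f - 1\<bar> < \<epsilon>" using \<open>0 < \<epsilon>\<close> by (simp add: \<eta>_def)
    qed
  qed
qed

theorem corollary4p4:
  fixes E :: "'e set" and P :: "'p set" and pe :: "'p \<Rightarrow> 'e set"
    and c :: "'e \<Rightarrow> real \<Rightarrow> real"
  assumes "finite E" and "finite P" and "P \<noteq> {}"
    and "\<forall>p\<in>P. pe p \<subseteq> E"
    and "\<forall>e\<in>E. continuous_on {0..} (c e)"
    and "\<forall>e\<in>E. mono_on {0..} (c e)"
    and "\<forall>e\<in>E. \<forall>x\<ge>0. 0 \<le> c e x"
    and "\<forall>e\<in>E. analytic_at_zero (c e)"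
  shows "\<forall>\<epsilon>>0. \<exists>M0>0. \<forall>M f. 0 < M \<and> M < M0 \<and> wardrop_eq P pe c M f
           \<longrightarrow> \<bar>poa E P pe c M f - 1\<bar> < \<epsilon>"
proof (intro allI impI)
  fix \<epsilon> :: real assume "0 < \<epsilon>"
  note fin = assms(1-4) and nn = assms(7)
  define Z where "Z = {e\<in>E. vanishes_near_zero (c e)}"
  have "\<forall>e\<in>E - Z. \<exists>\<alpha> d. 0 < \<alpha> \<and> leading_term (c e) \<alpha> d"
    using analytic_at_zero_nonneg_cases assms(7,8) by (auto simp: Z_def)
  then obtain \<alpha> d where lead: "\<forall>e\<in>E - Z. 0 < \<alpha> e \<and> leading_term (c e) (\<alpha> e) (d e)"
    by metis
  have "\<forall>\<^sub>F M in at_right 0. \<forall>f. wardrop_eq P pe c M f \<longrightarrow> \<bar>poa E P pe c M f - 1\<bar> < \<epsilon>"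
  proof (cases "\<exists>p\<in>P. pe p \<subseteq> Z")
    case True
    then obtain p0 where "p0 \<in> P" "\<forall>e\<in>pe p0. vanishes_near_zero (c e)" by (auto simp: Z_def)
    from poa_eventually_one_of_vanishing_path[OF fin(1,2,4) nn this] show ?thesis
      by eventually_elim (simp add: \<open>0 < \<epsilon>\<close>)
  next
    case False
    then show ?thesis
      by (intro poa_eventually_near_one[OF fin nn _ _ lead _ \<open>0 < \<epsilon>\<close>]) (auto simp: Z_def)
  qed
  then show "\<exists>M0>0. \<forall>M f. 0 < M \<and> M < M0 \<and> wardrop_eq P pe c M f \<longrightarrow> \<bar>poa E P pe c M f - 1\<bar> < \<epsilon>"
    unfolding eventually_at_right_field by blast
qed

end
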